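(* Let $V\subseteq B(H)\otimes N$ be a quantum multigraph on a pair $(M,N)$ with $N$ minimally represented on $K$, let $\mathcal{P}_V\in M\otimes M^{op}\otimes N\otimes N^{op}$ be its quantum multi-edge indicator, and let $\tilde V=(\mathrm{id}\otimes\mathrm{tr}_K)(V)\subseteq B(H)$ be the underlying quantum single-edged graph. Define $$\mathcal{S}_V=(\mathrm{id}\otimes\mathrm{id}\otimes\mathrm{tr}_K)(\mathrm{id}\otimes\mathrm{id}\otimes m)(\mathcal{P}_V)\in M\otimes M^{op},$$ where $m:N\otimes N^{op}\to N$, $m(a\otimes b)=ab$, is the multiplication of $N$. Then $\mathcal{S}_V$ is a positive element of $M\otimes M^{op}$, and under the Weaver action of $M\otimes M^{op}$ on $B(H)$ the range of $\pi(\mathcal{S}_V)$ is $\tilde V$.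
   Context: All Hilbert spaces are finite dimensional. $M\subseteq B(H)$, $N\subseteq B(K)$ are finite-dimensional von Neumann algebras; $N$ is minimally represented, meaning $N'=Z(N)$ (commutant equals center). $A^{op}$ denotes the opposite algebra. A quantum multi-relation (multigraph) on $(M,N)$ is a subspace $V\subseteq B(H\otimes K)$ with $V\subseteq B(H)\otimes N$, $V$ an $(M'\otimes1)$–$(M'\otimes1)$ bimodule, and $(1\otimes Z(N))V\subseteq V$. The Weaver action of $M\otimes M^{op}$ on $B(H)$ is $\pi(T_1\otimes T_2)(S)=T_1ST_2$, and that of $M\otimes M^{op}\otimes N\otimes N^{op}$ on $B(H)\otimes B(K)=B(H\otimes K)$ is $\pi(T_1\otimes T_2\otimes T_3\otimes T_4)(S_1\otimes S_2)=T_1S_1T_2\otimes T_3S_2T_4$. $B(H\otimes K)$ carries the Hilbert–Schmidt inner product from $\mathrm{tr}_H\otimes\mathrm{tr}_K$. The quantum multi-edge indicator of $V$ is $\mathcal{P}_V=1-\tilde{\mathcal{P}}_V$, where $\tilde{\mathcal{P}}_V$ is the generator (a projection) of the annihilator ideal $\{\mathcal{B}\in M\otimes M^{op}\otimes N\otimes N^{op}:\pi(\mathcal{B})(T)=0\ \forall T\in V\}$; equivalently $\mathcal{P}_V$ is the projection in $M\otimes M^{op}\otimes N\otimes N^{op}$ such that $\pi(\mathcal{P}_V)$ is the orthogonal projection of $B(H\otimes K)$ onto $V$. $\mathrm{tr}_K$ is the trace on $B(K)$ and $\mathrm{id}\otimes\mathrm{tr}_K$ the partial trace. *)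

theory Defs
  imports "HOL-Analysis.Analysis"
begin

text \<open>H = complex^'h, K = complex^'k for finite
  index types 'h, 'k; B(H) is the type of complex matrices complex^'h^'h, and
  B(H tensor K) = complex^('h*'k)^('h*'k) with row/column index pairs (i,alpha).\<close>

type_synonym 'n cmat = "complex^'n^'n"

definition cadj :: "'n::finite cmat \<Rightarrow> 'n cmat" where
  "cadj A = (\<chi> i j. cnj (A $ j $ i))"

definition csm :: "complex \<Rightarrow> 'n::finite cmat \<Rightarrow> 'n cmat" where
  "csm c A = (\<chi> i j. c * A $ i $ j)"

definition ctrace :: "'n::finite cmat \<Rightarrow> complex" where
  "ctrace A = (\<Sum>i\<in>UNIV. A $ i $ i)"

definition hs_inner :: "'n::finite cmat \<Rightarrow> 'n cmat \<Rightarrow> complex" where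
  "hs_inner A B = ctrace (cadj A ** B)"

definition lin_span :: "'n::finite cmat set \<Rightarrow> 'n cmat set" where
  "lin_span X = {Y. \<exists>F c. finite F \<and> F \<subseteq> X \<and> Y = (\<Sum>A\<in>F. csm (c A) A)}"

definition csubspace :: "'n::finite cmat set \<Rightarrow> bool" where
  "csubspace V \<longleftrightarrow> 0 \<in> V \<and> (\<forall>A\<in>V. \<forall>B\<in>V. A + B \<in> V) \<and> (\<forall>c. \<forall>A\<in>V. csm c A \<in> V)"

definition vN_algebra :: "'n::finite cmat set \<Rightarrow> bool" where
  "vN_algebra M \<longleftrightarrow> csubspace M \<and> mat 1 \<in> M \<and>
     (\<forall>A\<in>M. \<forall>B\<in>M. A ** B \<in> M) \<and> (\<forall>A\<in>M. cadj A \<in> M)"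

definition commutant :: "'n::finite cmat set \<Rightarrow> 'n cmat set" where
  "commutant S = {B. \<forall>A\<in>S. A ** B = B ** A}"

definition center :: "'n::finite cmat set \<Rightarrow> 'n cmat set" where
  "center N = N \<inter> commutant N"

definition minimally_represented :: "'n::finite cmat set \<Rightarrow> bool" where
  "minimally_represented N \<longleftrightarrow> commutant N = center N"

definition kron :: "'a::finite cmat \<Rightarrow> 'b::finite cmat \<Rightarrow> ('a \<times> 'b) cmat" where
  "kron A B = (\<chi> x y. A $ fst x $ fst y * B $ snd x $ snd y)"

definition BH_tensor :: "'k::finite cmat set \<Rightarrow> ('h::finite \<times> 'k) cmat set" where
  "BH_tensor N = lin_span {kron S b | S b. b \<in> N}"

definition quantum_multigraph ::
  "'h::finite cmat set \<Rightarrow> 'k::finite cmat set \<Rightarrow> ('h \<times> 'k) cmat set \<Rightarrow> bool" where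
  "quantum_multigraph M N V \<longleftrightarrow> csubspace V \<and> V \<subseteq> BH_tensor N \<and>
     (\<forall>a\<in>commutant M. \<forall>T\<in>V. kron a (mat 1) ** T \<in> V \<and> T ** kron a (mat 1) \<in> V) \<and>
     (\<forall>z\<in>center N. \<forall>T\<in>V. kron (mat 1) z ** T \<in> V)"

text \<open>Concrete faithful realisation of the opposite algebra via transposition:
  an elementary tensor  a tensor b^op  of M tensor M^op is realised as the matrix
  on H tensor H with entries ((i,j),(p,q)) |-> a_ip * b_qj  (i.e. a tensor b^T).
  This is a *-isomorphism of the algebraic tensor product onto its image
  (products: (a tensor b^op)(a' tensor b'^op) = aa' tensor (b'b)^op).\<close>
definition el2 :: "'h::finite cmat \<Rightarrow> 'h cmat \<Rightarrow> ('h \<times> 'h) cmat" where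
  "el2 a b = (\<chi> x y. case (x, y) of ((i, j), (p, q)) \<Rightarrow> a $ i $ p * b $ q $ j)"

definition el4 :: "'h::finite cmat \<Rightarrow> 'h cmat \<Rightarrow> 'k::finite cmat \<Rightarrow> 'k cmat
    \<Rightarrow> ('h \<times> 'h \<times> 'k \<times> 'k) cmat" where
  "el4 a b c d = (\<chi> x y. case (x, y) of ((i, j, \<alpha>, \<beta>), (p, q, \<gamma>, \<delta>)) \<Rightarrow>
      a $ i $ p * b $ q $ j * c $ \<alpha> $ \<gamma> * d $ \<delta> $ \<beta>)"

definition MMop :: "'h::finite cmat set \<Rightarrow> ('h \<times> 'h) cmat set" where
  "MMop M = lin_span {el2 a b | a b. a \<in> M \<and> b \<in> M}"

definition MMopNNop :: "'h::finite cmat set \<Rightarrow> 'k::finite cmat set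
    \<Rightarrow> ('h \<times> 'h \<times> 'k \<times> 'k) cmat set" where
  "MMopNNop M N = lin_span {el4 a b c d | a b c d. a \<in> M \<and> b \<in> M \<and> c \<in> N \<and> d \<in> N}"

text \<open>Weaver actions (linear extensions of  a tensor b^op : S |-> a S b  and
  a tensor b^op tensor c tensor d^op : S1 tensor S2 |-> a S1 b tensor c S2 d).\<close>
definition weaver2 :: "('h::finite \<times> 'h) cmat \<Rightarrow> 'h cmat \<Rightarrow> 'h cmat" where
  "weaver2 X S = (\<chi> i j. \<Sum>p\<in>UNIV. \<Sum>q\<in>UNIV. X $ (i, j) $ (p, q) * S $ p $ q)"

definition weaver4 :: "('h::finite \<times> 'h \<times> 'k::finite \<times> 'k) cmat
    \<Rightarrow> ('h \<times> 'k) cmat \<Rightarrow> ('h \<times> 'k) cmat" where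
  "weaver4 X S = (\<chi> x y. \<Sum>p\<in>UNIV. \<Sum>q\<in>UNIV. \<Sum>\<gamma>\<in>UNIV. \<Sum>\<delta>\<in>UNIV.
      X $ (fst x, fst y, snd x, snd y) $ (p, q, \<gamma>, \<delta>) * S $ (p, \<gamma>) $ (q, \<delta>))"

definition multi_edge_indicator :: "'h::finite cmat set \<Rightarrow> 'k::finite cmat set
    \<Rightarrow> ('h \<times> 'k) cmat set \<Rightarrow> ('h \<times> 'h \<times> 'k \<times> 'k) cmat \<Rightarrow> bool" where
  "multi_edge_indicator M N V P \<longleftrightarrow> P \<in> MMopNNop M N \<and> P ** P = P \<and> cadj P = P \<and>
     (\<forall>S. weaver4 P S \<in> V \<and> (\<forall>T\<in>V. hs_inner T (S - weaver4 P S) = 0))"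

definition ptrace_K :: "('h::finite \<times> 'k::finite) cmat \<Rightarrow> 'h cmat" where
  "ptrace_K T = (\<chi> i j. \<Sum>\<alpha>\<in>UNIV. T $ (i, \<alpha>) $ (j, \<alpha>))"

text \<open>id tensor id tensor m, where m(c tensor d^op) = c d, realised on the concrete
  representation (3-fold elements a tensor b^op tensor c have entries a_ip b_qj c_{alpha beta}).\<close>
definition idid_mult :: "('h::finite \<times> 'h \<times> 'k::finite \<times> 'k) cmat \<Rightarrow> ('h \<times> 'h \<times> 'k) cmat" where
  "idid_mult X = (\<chi> x y. case (x, y) of ((i, j, \<alpha>), (p, q, \<beta>)) \<Rightarrow>
      \<Sum>\<gamma>\<in>UNIV. X $ (i, j, \<alpha>, \<beta>) $ (p, q, \<gamma>, \<gamma>))"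

definition idid_trace :: "('h::finite \<times> 'h \<times> 'k::finite) cmat \<Rightarrow> ('h \<times> 'h) cmat" where
  "idid_trace Y = (\<chi> x y. case (x, y) of ((i, j), (p, q)) \<Rightarrow>
      \<Sum>\<alpha>\<in>UNIV. Y $ (i, j, \<alpha>) $ (p, q, \<alpha>))"

definition positive_in :: "'n::finite cmat set \<Rightarrow> 'n cmat \<Rightarrow> bool" where
  "positive_in A X \<longleftrightarrow> X \<in> A \<and> (\<exists>C\<in>A. X = cadj C ** C)"

end

(*
  Let J = id (x) |Omega> : H (x) H -> H (x) H (x) K (x) K with Omega = sum_g e_g (x) e_g.
  Then S_V = J* P J, and since P = P* P it is the Gram matrix (P J)* (P J); it lies in
  M (x) M^op because (id (x) id (x) tr o m)(a (x) b (x) c (x) d) = tr(c d) a (x) b.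
  Positivity inside the subalgebra M (x) M^op comes from polynomial functional calculus:
  the roots of the minimal polynomial of a Gram matrix are non-negative reals, and if s
  interpolates the square root on them, then S_V = s(S_V)* s(S_V) with s(S_V) in M (x) M^op.

  For the range, pi(S_V) X = (id (x) tr_K)(Q (X (x) 1)), where Q = pi(P) is the orthogonal
  projection onto V.  As id (x) tr_K is the adjoint of E X = X (x) 1, pi(S_V) = (Q E)* (Q E),
  whose range is that of (Q E)* = (id (x) tr_K) Q, i.e. (id (x) tr_K)(V).
*)

theory Submission
  imports Defs "HOL-Computational_Algebra.Fundamental_Theorem_Algebra"
begin

definition ctranspose :: "complex^'n^'m \<Rightarrow> complex^'m^'n" where
  "ctranspose A = (\<chi> i j. cnj (A $ j $ i))"

lemma cadj_eq_ctranspose: "cadj A = ctranspose A"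
  by (simp add: cadj_def ctranspose_def)

lemma ctranspose_ctranspose [simp]: "ctranspose (ctranspose A) = A"
  by (simp add: ctranspose_def vec_eq_iff)

lemma ctranspose_matrix_mult: "ctranspose (A ** B) = ctranspose B ** ctranspose A"
  by (simp add: ctranspose_def matrix_matrix_mult_def vec_eq_iff cnj_sum mult.commute)

lemma ctranspose_diff: "ctranspose (A - B) = ctranspose A - ctranspose B"
  by (simp add: ctranspose_def vec_eq_iff)

lemma ctranspose_csm: "ctranspose (csm c A) = csm (cnj c) (ctranspose A)"
  by (simp add: ctranspose_def csm_def vec_eq_iff)

lemma ctranspose_mat_one [simp]: "ctranspose (mat 1 :: complex^'n^'n) = mat 1"
  by (simp add: ctranspose_def mat_def vec_eq_iff)

lemma ctranspose_sum: "ctranspose (sum f S) = (\<Sum>x\<in>S. ctranspose (f x))"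
  by (simp add: ctranspose_def vec_eq_iff cnj_sum)

definition cinner :: "complex^'n \<Rightarrow> complex^'n \<Rightarrow> complex" where
  "cinner u v = (\<Sum>i\<in>UNIV. cnj (u $ i) * v $ i)"

lemma cinner_matrix_vector_mult: "cinner u (A *v w) = cinner (ctranspose A *v u) w"
proof -
  have "cinner u (A *v w) = (\<Sum>i\<in>UNIV. \<Sum>j\<in>UNIV. cnj (u $ i) * A $ i $ j * w $ j)"
    by (simp add: cinner_def matrix_vector_mult_def sum_distrib_left mult.assoc)
  also have "\<dots> = (\<Sum>j\<in>UNIV. \<Sum>i\<in>UNIV. cnj (u $ i) * A $ i $ j * w $ j)"
    by (rule sum.swap)
  also have "\<dots> = cinner (ctranspose A *v u) w"
    by (simp add: cinner_def matrix_vector_mult_def ctranspose_def sum_distrib_left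
        sum_distrib_right ac_simps)
  finally show ?thesis .
qed

lemma cinner_self: "cinner u u = of_real ((norm u)\<^sup>2)"
proof -
  have norm_sq: "(norm u)\<^sup>2 = (\<Sum>i\<in>UNIV. (norm (u $ i))\<^sup>2)"
    by (simp add: power2_norm_eq_inner inner_vec_def)
  have "cnj z * z = of_real ((norm z)\<^sup>2)" for z :: complex
    by (simp only: complex_norm_square mult.commute)
  then show ?thesis
    by (simp only: cinner_def norm_sq of_real_sum)
qed

lemma cinner_scalar_mult_right: "cinner w (z *s v) = z * cinner w v"
  by (simp add: cinner_def sum_distrib_left ac_simps)

lemma cinner_gram: "cinner w ((ctranspose B ** B) *v w) = of_real ((norm (B *v w))\<^sup>2)"
  by (simp flip: matrix_vector_mul_assoc
      add: cinner_matrix_vector_mult[of w "ctranspose B"] cinner_self)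

lemma csm_add_left: "csm (a + b) A = csm a A + csm b A"
  by (simp add: csm_def vec_eq_iff distrib_right)

lemma csm_add_right: "csm a (A + B) = csm a A + csm a B"
  by (simp add: csm_def vec_eq_iff distrib_left)

lemma csm_csm: "csm a (csm b A) = csm (a * b) A"
  by (simp add: csm_def vec_eq_iff mult.assoc)

lemma csm_zero [simp]: "csm 0 A = 0" "csm a 0 = 0"
  by (simp_all add: csm_def vec_eq_iff)

lemma csm_one [simp]: "csm 1 A = A"
  by (simp add: csm_def vec_eq_iff)

lemma csm_minus_one: "csm (-1) A = - A"
  by (simp add: csm_def vec_eq_iff)

lemma csm_of_real: "csm (of_real r) A = r *\<^sub>R A"
  unfolding csm_def by (simp add: vec_eq_iff) (simp add: scaleR_conv_of_real)

lemma csm_sum_right: "csm c (sum f S) = (\<Sum>x\<in>S. csm c (f x))"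
  by (induction S rule: infinite_finite_induct) (auto simp: csm_add_right)

lemma matrix_mult_csm_left: "csm c A ** B = csm c (A ** B)"
  by (simp add: csm_def matrix_matrix_mult_def vec_eq_iff sum_distrib_left mult.assoc)

lemma matrix_mult_csm_right: "A ** csm c B = csm c (A ** B)"
  by (simp add: csm_def matrix_matrix_mult_def vec_eq_iff sum_distrib_left mult.left_commute)

lemma csm_mat_one_mult_vector: "csm c (mat 1) *v w = c *s w"
  by (simp add: vec_eq_iff matrix_vector_mult_def csm_def mat_def if_distrib if_distribR
      cong: if_cong)

lemma matrix_add_rdistrib: "(A + B) ** C = A ** C + B ** C"
  by (vector matrix_matrix_mult_def sum.distrib[symmetric] field_simps)

lemma matrix_sum_distrib_left: "(A::'a::semiring_1^'n^'m) ** sum f S = (\<Sum>x\<in>S. A ** f x)"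
  by (induction S rule: infinite_finite_induct) (auto simp: matrix_add_ldistrib)

lemma matrix_sum_distrib_right: "sum f S ** (A::'a::semiring_1^'n^'m) = (\<Sum>x\<in>S. f x ** A)"
  by (induction S rule: infinite_finite_induct) (auto simp: matrix_add_rdistrib)

section \<open>Polynomials evaluated at matrices\<close>

primrec matpow :: "'n::finite cmat \<Rightarrow> nat \<Rightarrow> 'n cmat" where
  "matpow X 0 = mat 1"
| "matpow X (Suc n) = X ** matpow X n"

lemma matpow_commute: "matpow X n ** X = X ** matpow X n"
  by (induction n) (simp_all add: matrix_mul_assoc[symmetric])

lemma cadj_matpow: "cadj X = X \<Longrightarrow> cadj (matpow X n) = matpow X n"
  by (induction n) (simp_all add: cadj_eq_ctranspose ctranspose_matrix_mult matpow_commute)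

definition poly_mat :: "complex poly \<Rightarrow> 'n::finite cmat \<Rightarrow> 'n cmat" where
  "poly_mat p X = (\<Sum>i\<le>degree p. csm (coeff p i) (matpow X i))"

lemma poly_mat_eq_sum_lessThan:
  assumes "degree p < n"
  shows "poly_mat p X = (\<Sum>i<n. csm (coeff p i) (matpow X i))"
proof -
  have "(\<Sum>i<n. csm (coeff p i) (matpow X i)) = (\<Sum>i\<le>degree p. csm (coeff p i) (matpow X i))"
    by (rule sum.mono_neutral_right) (use assms in \<open>auto simp: coeff_eq_0\<close>)
  then show ?thesis by (simp add: poly_mat_def)
qed

lemma poly_mat_0 [simp]: "poly_mat 0 X = 0"
  by (simp add: poly_mat_def)

lemma poly_mat_add: "poly_mat (p + q) X = poly_mat p X + poly_mat q X"
proof -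
  define n where "n = Suc (max (degree p) (degree q))"
  have "degree (p + q) < n" "degree p < n" "degree q < n"
    using degree_add_le_max[of p q] by (simp_all add: n_def)
  then show ?thesis
    by (simp only: poly_mat_eq_sum_lessThan) (simp add: csm_add_left sum.distrib)
qed

lemma poly_mat_smult: "poly_mat (smult a p) X = csm a (poly_mat p X)"
proof -
  have "degree (smult a p) < Suc (degree p)" "degree p < Suc (degree p)"
    by simp_all
  then show ?thesis
    by (simp only: poly_mat_eq_sum_lessThan) (simp add: csm_sum_right csm_csm del: sum.lessThan_Suc)
qed

lemma poly_mat_pCons: "poly_mat (pCons a p) X = csm a (mat 1) + X ** poly_mat p X"
proof -
  define n where "n = Suc (degree p)"
  have "degree (pCons a p) < Suc n" "degree p < n"
    using degree_pCons_le[of a p] by (simp_all add: n_def)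
  then show ?thesis
    by (simp only: poly_mat_eq_sum_lessThan sum.lessThan_Suc_shift)
      (simp add: matrix_sum_distrib_left matrix_mult_csm_right)
qed

lemma poly_mat_const: "poly_mat [:c:] X = csm c (mat 1)"
  using poly_mat_pCons[of c 0 X] by simp

lemma poly_mat_monom: "poly_mat (monom c n) X = csm c (matpow X n)"
  by (induction n) (simp_all add: monom_0 monom_Suc poly_mat_const poly_mat_pCons
      matrix_mult_csm_right)

lemma poly_mat_mult: "poly_mat (p * q) X = poly_mat p X ** poly_mat q X"
proof (induction p rule: pCons_induct)
  case (pCons a p)
  have "poly_mat (pCons a p * q) X = csm a (poly_mat q X) + X ** poly_mat (p * q) X"
    by (simp add: poly_mat_add poly_mat_smult poly_mat_pCons)
  also have "\<dots> = (csm a (mat 1) + X ** poly_mat p X) ** poly_mat q X"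
    by (simp add: pCons.IH matrix_add_rdistrib matrix_mult_csm_left matrix_mul_assoc)
  finally show ?case by (simp add: poly_mat_pCons)
qed simp

lemma poly_mat_diff: "poly_mat (p - q) X = poly_mat p X - poly_mat q X"
  using poly_mat_add[of p "- q" X] poly_mat_smult[of "-1" q X] by (simp add: csm_minus_one)

lemma poly_mat_sum: "poly_mat (sum f S) X = (\<Sum>x\<in>S. poly_mat (f x) X)"
  by (induction S rule: infinite_finite_induct) (simp_all add: poly_mat_add)

lemma poly_mat_power: "poly_mat (p ^ n) X = matpow (poly_mat p X) n"
  by (induction n) (simp_all add: poly_mat_mult poly_mat_const flip: pCons_one)

lemma poly_mat_map_poly_cnj:
  assumes "cadj X = X"
  shows "poly_mat (map_poly cnj p) X = cadj (poly_mat p X)"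
proof -
  have "degree (map_poly cnj p) < Suc (degree p)" "degree p < Suc (degree p)"
    using degree_map_poly[of cnj p] by simp_all
  then show ?thesis
    using cadj_matpow[OF assms]
    by (simp only: poly_mat_eq_sum_lessThan)
      (simp add: coeff_map_poly cadj_eq_ctranspose ctranspose_sum ctranspose_csm
        del: sum.lessThan_Suc)
qed

lemma poly_mat_in_subalgebra:
  assumes "csubspace A" and "mat 1 \<in> A" and "\<forall>U\<in>A. \<forall>W\<in>A. U ** W \<in> A" and "X \<in> A"
  shows "poly_mat p X \<in> A"
proof -
  have pow: "matpow X i \<in> A" for i
    using assms(2-4) by (induction i) simp_all
  have "(\<Sum>i\<in>F. csm (coeff p i) (matpow X i)) \<in> A" for F
    using assms(1) pow by (induction F rule: infinite_finite_induct) (simp_all add: csubspace_def)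
  then show ?thesis by (simp add: poly_mat_def)
qed

lemma poly_mat_annihilator_exists: "\<exists>p. p \<noteq> 0 \<and> poly_mat p (X::'n::finite cmat) = 0"
proof (cases "inj_on (matpow X) {..DIM('n cmat)}")
  case False
  then obtain i j where ij: "i \<noteq> j" "matpow X i = matpow X j"
    unfolding inj_on_def by blast
  define p where "p = monom (1::complex) i - monom 1 j"
  have "coeff p i = 1" using ij by (simp add: p_def coeff_monom)
  moreover have "poly_mat p X = 0" using ij by (simp add: p_def poly_mat_diff poly_mat_monom)
  ultimately show ?thesis by (metis coeff_0 zero_neq_one)
next
  case True
  define S where "S = matpow X ` {..DIM('n cmat)}"
  have "card S = Suc DIM('n cmat)" using True by (simp add: S_def card_image)
  then have "dependent S" using dependent_biggerset[of S] by (simp add: S_def)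
  then obtain u where u: "\<exists>v\<in>S. u v \<noteq> 0" "(\<Sum>v\<in>S. u v *\<^sub>R v) = 0"
    using real_vector.dependent_finite[of S] by (auto simp: S_def)
  define p where "p = (\<Sum>i\<le>DIM('n cmat). monom (complex_of_real (u (matpow X i))) i)"
  have "poly_mat p X = (\<Sum>i\<le>DIM('n cmat). u (matpow X i) *\<^sub>R matpow X i)"
    by (simp add: p_def poly_mat_sum poly_mat_monom csm_of_real)
  also have "\<dots> = (\<Sum>v\<in>S. u v *\<^sub>R v)"
    unfolding S_def by (subst sum.reindex[OF True]) simp
  moreover obtain i where i: "i \<le> DIM('n cmat)" "u (matpow X i) \<noteq> 0"
    using u(1) by (auto simp: S_def)
  then have "coeff p i \<noteq> 0"
    by (simp add: p_def coeff_sum coeff_monom)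
  ultimately show ?thesis using u(2) by (metis coeff_0)
qed

section \<open>Gram matrices are positive in every unital subalgebra\<close>

lemma gram_eigenvalue_nonneg:
  assumes "(ctranspose B ** B) *v w = z *s w" and "w \<noteq> 0"
  shows "Im z = 0 \<and> Re z \<ge> 0"
proof -
  have "of_real ((norm (B *v w))\<^sup>2) = z * of_real ((norm w)\<^sup>2)"
    using cinner_gram[of w B] by (simp add: assms(1) cinner_scalar_mult_right cinner_self)
  then have "z = of_real ((norm (B *v w))\<^sup>2 / (norm w)\<^sup>2)"
    using assms(2) by (simp add: field_simps)
  then show ?thesis by simp
qed

lemma hermitian_nilpotent_eq_0:
  assumes "cadj Y = Y" and "matpow Y (Suc k) = 0"
  shows "Y = 0"
proof -
  have cancel: "Y ** Z = 0" if "Y ** (Y ** Z) = 0" for Z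
  proof -
    have "(norm ((Y ** Z) *v u))\<^sup>2 = 0" for u
      using cinner_gram[of "Z *v u" Y] that assms(1)
      by (simp add: cadj_eq_ctranspose matrix_vector_mul_assoc matrix_mul_assoc cinner_def)
    then show ?thesis by (simp add: matrix_eq)
  qed
  show ?thesis
    using assms(2)
  proof (induction k)
    case (Suc k)
    have "Y ** (Y ** matpow Y k) = 0"
      using Suc.prems by simp
    then have "matpow Y (Suc k) = 0"
      using cancel by simp
    then show ?case by (rule Suc.IH)
  qed simp
qed

lemma interpolating_poly_exists:
  fixes g :: "complex \<Rightarrow> complex"
  assumes "finite Z"
  shows "\<exists>s. \<forall>z\<in>Z. poly s z = g z"
  using assms
proof (induction Z rule: finite_induct)
  case (insert a Z)
  then obtain s where s: "\<forall>z\<in>Z. poly s z = g z" by blast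
  define q where "q = (\<Prod>w\<in>Z. [:-w, 1:])"
  have "poly q z = 0" if "z \<in> Z" for z
    using that insert(1) by (simp add: q_def poly_prod prod_zero_iff)
  moreover have "poly q a \<noteq> 0"
    using insert(1,2) by (simp add: q_def poly_prod prod_zero_iff)
  ultimately have "\<forall>z\<in>insert a Z. poly (s + smult ((g a - poly s a) / poly q a) q) z = g z"
    using s by auto
  then show ?case by blast
qed simp

lemma poly_mat_minimal_annihilator_exists:
  "\<exists>p. p \<noteq> 0 \<and> poly_mat p X = 0 \<and> (\<forall>q. q \<noteq> 0 \<and> poly_mat q X = 0 \<longrightarrow> degree p \<le> degree q)"
proof -
  obtain p where "p \<noteq> 0 \<and> poly_mat p X = 0"
    using poly_mat_annihilator_exists by blast
  from ex_has_least_nat[of "\<lambda>p. p \<noteq> 0 \<and> poly_mat p X = 0", OF this, of degree]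
  show ?thesis by blast
qed

lemma minimal_annihilator_roots_gram:
  assumes X: "X = ctranspose B ** B"
    and p: "poly_mat p X = 0" "\<forall>q. q \<noteq> 0 \<and> poly_mat q X = 0 \<longrightarrow> degree p \<le> degree q"
    and "p \<noteq> 0" and "poly p z = 0"
  shows "Im z = 0 \<and> Re z \<ge> 0"
proof (rule ccontr)
  assume z: "\<not> (Im z = 0 \<and> Re z \<ge> 0)"
  obtain r where r: "p = [:-z, 1:] * r"
    using assms(5) poly_eq_0_iff_dvd by blast
  have "r \<noteq> 0" using assms(4) r by auto
  have "poly_mat [:-z, 1:] X = csm (-z) (mat 1) + X"
    by (simp add: poly_mat_pCons poly_mat_const)
  then have "(csm (-z) (mat 1) + X) ** poly_mat r X = 0"
    using p(1) by (simp only: r poly_mat_mult)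
  then have "(csm (-z) (mat 1) + X) *v (poly_mat r X *v u) = 0" for u
    by (simp add: matrix_vector_mul_assoc)
  then have "X *v (poly_mat r X *v u) = z *s (poly_mat r X *v u)" for u
    by (simp add: matrix_vector_mult_add_rdistrib csm_mat_one_mult_vector add_eq_0_iff2)
  then have "poly_mat r X *v u = 0" for u
    using gram_eigenvalue_nonneg[of B "poly_mat r X *v u" z] z X by blast
  then have "poly_mat r X = 0"
    by (simp add: matrix_eq)
  then have "degree p \<le> degree r" using p(2) \<open>r \<noteq> 0\<close> by blast
  moreover have "degree p = degree [:-z, 1:] + degree r"
    unfolding r by (rule degree_mult_eq) (simp_all add: \<open>r \<noteq> 0\<close>)
  ultimately show False by simp
qed

lemma poly_mat_annihilator_nonconstant:
  assumes "p \<noteq> 0" and "poly_mat p (X :: 'n::finite cmat) = 0"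
  shows "degree p \<noteq> 0"
proof
  assume "degree p = 0"
  then have "csm (coeff p 0) (mat 1) = (0 :: 'n cmat)"
    using assms(2) by (metis degree_0_id poly_mat_const)
  then have "csm (coeff p 0) (mat 1) $ i $ i = (0 :: 'n cmat) $ i $ i" for i
    by simp
  then have "coeff p 0 = 0"
    by (simp add: csm_def mat_def)
  with \<open>degree p = 0\<close> assms(1) show False
    by (metis degree_0_id pCons_0_0)
qed

lemma poly_sqrt_interpolant_exists:
  assumes "finite Z" and "\<And>z. z \<in> Z \<Longrightarrow> Im z = 0 \<and> Re z \<ge> 0"
  shows "\<exists>s. \<forall>z\<in>Z. poly (map_poly cnj s * s) z = z"
proof -
  obtain s where s: "\<forall>z\<in>Z. poly s z = of_real (sqrt (Re z))"
    using interpolating_poly_exists[OF assms(1), of "\<lambda>z. of_real (sqrt (Re z))"] by blast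
  have "poly (map_poly cnj s * s) z = z" if "z \<in> Z" for z
  proof -
    have "cnj z = z" "z = of_real (Re z)" "Re z \<ge> 0"
      using assms(2)[OF that] by (simp_all add: complex_eq_iff)
    then show ?thesis
      using s that by (simp add: poly_map_poly_cnj flip: of_real_mult)
  qed
  then show ?thesis by blast
qed

text \<open>With \<open>s\<close> interpolating the square root on the spectrum, \<open>s(X)\<^sup>* s(X) - X\<close> is a
  hermitian polynomial in \<open>X\<close> vanishing on the roots of the minimal polynomial, hence nilpotent.\<close>
lemma gram_factor_in_subalgebra:
  fixes B :: "complex^'n::finite^'m::finite"
  assumes "csubspace A" and "mat 1 \<in> A" and "\<forall>U\<in>A. \<forall>W\<in>A. U ** W \<in> A"
    and "X \<in> A" and X: "X = ctranspose B ** B"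
  shows "\<exists>C\<in>A. X = cadj C ** C"
proof -
  obtain p where p: "p \<noteq> 0" "poly_mat p X = 0"
    and minimal: "\<forall>q. q \<noteq> 0 \<and> poly_mat q X = 0 \<longrightarrow> degree p \<le> degree q"
    using poly_mat_minimal_annihilator_exists by blast
  have deg: "degree p \<noteq> 0"
    using poly_mat_annihilator_nonconstant[OF p] .
  obtain s where s: "\<forall>z\<in>{z. poly p z = 0}. poly (map_poly cnj s * s) z = z"
    using poly_sqrt_interpolant_exists[OF poly_roots_finite[OF p(1)]]
      minimal_annihilator_roots_gram[OF X p(2) minimal p(1)] by blast
  define f where "f = map_poly cnj s * s - [:0, 1:]"
  have "p dvd f ^ degree p"
    using nullstellensatz_lemma[of p f] s deg by (simp add: f_def)
  then have "matpow (poly_mat f X) (degree p) = 0"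
    using p(2) by (metis dvdE poly_mat_mult poly_mat_power times0_left)
  moreover have herm: "cadj X = X"
    by (simp add: X cadj_eq_ctranspose ctranspose_matrix_mult)
  then have f_X: "poly_mat f X = cadj (poly_mat s X) ** poly_mat s X - X"
    by (simp add: f_def poly_mat_diff poly_mat_mult poly_mat_map_poly_cnj poly_mat_pCons
        poly_mat_const)
  moreover have "cadj (poly_mat f X) = poly_mat f X"
    using herm by (simp add: f_X cadj_eq_ctranspose ctranspose_diff ctranspose_matrix_mult)
  ultimately have "poly_mat f X = 0"
    using hermitian_nilpotent_eq_0 deg by (metis not0_implies_Suc)
  then have "X = cadj (poly_mat s X) ** poly_mat s X"
    using f_X by simp
  then show ?thesis
    using poly_mat_in_subalgebra[OF assms(1-4)] by blast
qed

lemma sum_UNIV_prod: "(\<Sum>x\<in>UNIV. f x) = (\<Sum>a\<in>UNIV. \<Sum>b\<in>UNIV. f (a, b))"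
  by (simp add: sum.cartesian_product' flip: UNIV_Times_UNIV)

lemma csubspace_sum: "csubspace W \<Longrightarrow> (\<And>x. x \<in> S \<Longrightarrow> f x \<in> W) \<Longrightarrow> sum f S \<in> W"
  by (induction S rule: infinite_finite_induct) (simp_all add: csubspace_def)

lemma csubspace_csm: "csubspace W \<Longrightarrow> A \<in> W \<Longrightarrow> csm c A \<in> W"
  by (simp add: csubspace_def)

lemma lin_span_base: "A \<in> G \<Longrightarrow> A \<in> lin_span G"
  unfolding lin_span_def by (intro CollectI exI[of _ "{A}"] exI[of _ "\<lambda>_. 1"]) simp

lemma csubspace_lin_span: "csubspace (lin_span G)"
  unfolding csubspace_def
proof (intro conjI ballI allI)
  show "0 \<in> lin_span G"
    unfolding lin_span_def by (intro CollectI exI[of _ "{}"]) simp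
next
  fix c Y assume "Y \<in> lin_span G"
  then obtain F a where "finite F" "F \<subseteq> G" "Y = (\<Sum>A\<in>F. csm (a A) A)"
    by (auto simp: lin_span_def)
  then show "csm c Y \<in> lin_span G"
    unfolding lin_span_def
    by (intro CollectI exI[of _ F] exI[of _ "\<lambda>A. c * a A"]) (simp add: csm_sum_right csm_csm)
next
  fix Y1 Y2 assume "Y1 \<in> lin_span G" "Y2 \<in> lin_span G"
  then obtain F1 a1 F2 a2 where F: "finite F1" "F1 \<subseteq> G" "Y1 = (\<Sum>A\<in>F1. csm (a1 A) A)"
      "finite F2" "F2 \<subseteq> G" "Y2 = (\<Sum>A\<in>F2. csm (a2 A) A)"
    by (auto simp: lin_span_def)
  define a where "a A = (if A \<in> F1 then a1 A else 0) + (if A \<in> F2 then a2 A else 0)" for A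
  have "Y1 = (\<Sum>A\<in>F1 \<union> F2. csm (if A \<in> F1 then a1 A else 0) A)"
    "Y2 = (\<Sum>A\<in>F1 \<union> F2. csm (if A \<in> F2 then a2 A else 0) A)"
    unfolding F(3,6) by (rule sum.mono_neutral_cong_left; use F in auto)+
  then have "Y1 + Y2 = (\<Sum>A\<in>F1 \<union> F2. csm (a A) A)"
    by (simp add: a_def csm_add_left sum.distrib)
  then show "Y1 + Y2 \<in> lin_span G"
    unfolding lin_span_def using F by (intro CollectI exI[of _ "F1 \<union> F2"] exI[of _ a]) simp
qed

lemma lin_span_mult_closed:
  assumes "\<And>A B. A \<in> G \<Longrightarrow> B \<in> G \<Longrightarrow> A ** B \<in> lin_span G"
    and "Y1 \<in> lin_span G" and "Y2 \<in> lin_span G"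
  shows "Y1 ** Y2 \<in> lin_span G"
proof -
  obtain F1 a1 F2 a2 where F: "finite F1" "F1 \<subseteq> G" "Y1 = (\<Sum>A\<in>F1. csm (a1 A) A)"
      "finite F2" "F2 \<subseteq> G" "Y2 = (\<Sum>A\<in>F2. csm (a2 A) A)"
    using assms(2,3) by (auto simp: lin_span_def)
  have "Y1 ** Y2 = (\<Sum>B\<in>F2. csm (a2 B) (\<Sum>A\<in>F1. csm (a1 A) (A ** B)))"
    by (simp add: F(3,6) matrix_sum_distrib_left matrix_sum_distrib_right matrix_mult_csm_left
        matrix_mult_csm_right)
  also have "\<dots> \<in> lin_span G"
    using F(2,5) assms(1) by (intro csubspace_sum csubspace_csm csubspace_lin_span) auto
  finally show ?thesis .
qed

lemma el2_mult: "el2 a b ** el2 a' b' = el2 (a ** a') (b' ** b)"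
proof -
  have "(el2 a b ** el2 a' b') $ (i, j) $ (p, q) = el2 (a ** a') (b' ** b) $ (i, j) $ (p, q)"
    for i j p q
  proof -
    have "(el2 a b ** el2 a' b') $ (i, j) $ (p, q)
        = (\<Sum>r\<in>UNIV. \<Sum>s\<in>UNIV. (a $ i $ r * a' $ r $ p) * (b' $ q $ s * b $ s $ j))"
      by (simp add: matrix_matrix_mult_def el2_def sum_UNIV_prod mult_ac)
    then show ?thesis
      by (simp add: el2_def matrix_matrix_mult_def sum_product)
  qed
  then show ?thesis by (simp add: vec_eq_iff split_paired_all)
qed

lemma el2_mat_one: "el2 (mat 1) (mat 1) = (mat 1 :: ('h::finite \<times> 'h) cmat)"
  by (auto simp: vec_eq_iff split_paired_all el2_def mat_def)

lemma el2_in_MMop: "a \<in> M \<Longrightarrow> b \<in> M \<Longrightarrow> el2 a b \<in> MMop M"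
  unfolding MMop_def by (rule lin_span_base) auto

lemma csubspace_MMop: "csubspace (MMop M)"
  unfolding MMop_def by (rule csubspace_lin_span)

lemma MMop_subalgebra:
  assumes "vN_algebra M"
  shows "csubspace (MMop M)" and "mat 1 \<in> MMop M" and "\<forall>U\<in>MMop M. \<forall>W\<in>MMop M. U ** W \<in> MMop M"
proof -
  have M: "mat 1 \<in> M" "\<And>a b. a \<in> M \<Longrightarrow> b \<in> M \<Longrightarrow> a ** b \<in> M"
    using assms by (auto simp: vN_algebra_def)
  show "csubspace (MMop M)"
    by (rule csubspace_MMop)
  show "mat 1 \<in> MMop M"
    using el2_in_MMop[OF M(1) M(1)] by (simp add: el2_mat_one)
  show "\<forall>U\<in>MMop M. \<forall>W\<in>MMop M. U ** W \<in> MMop M"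
    unfolding MMop_def
  proof (intro ballI, rule lin_span_mult_closed)
    fix A B assume "A \<in> {el2 a b |a b. a \<in> M \<and> b \<in> M}" "B \<in> {el2 a b |a b. a \<in> M \<and> b \<in> M}"
    then obtain a b a' b' where "A = el2 a b" "B = el2 a' b'" "a \<in> M" "b \<in> M" "a' \<in> M" "b' \<in> M"
      by blast
    then show "A ** B \<in> lin_span {el2 a b |a b. a \<in> M \<and> b \<in> M}"
      using el2_in_MMop[of "a ** a'" M "b' ** b"] by (simp add: el2_mult M(2) MMop_def)
  qed
qed

section \<open>The contraction \<open>(id \<otimes> id \<otimes> tr\<^sub>K)(id \<otimes> id \<otimes> m)\<close>\<close>

definition idid_trace_mult :: "('h::finite \<times> 'h \<times> 'k::finite \<times> 'k) cmat \<Rightarrow> ('h \<times> 'h) cmat" where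
  "idid_trace_mult P = idid_trace (idid_mult P)"

lemma idid_trace_mult_entry:
  "idid_trace_mult P $ (i, j) $ (p, q) = (\<Sum>\<alpha>\<in>UNIV. \<Sum>\<gamma>\<in>UNIV. P $ (i, j, \<alpha>, \<alpha>) $ (p, q, \<gamma>, \<gamma>))"
  by (simp add: idid_trace_mult_def idid_trace_def idid_mult_def)

lemma idid_trace_mult_add: "idid_trace_mult (P + Q) = idid_trace_mult P + idid_trace_mult Q"
  by (simp add: vec_eq_iff split_paired_all idid_trace_mult_entry sum.distrib)

lemma idid_trace_mult_csm: "idid_trace_mult (csm c P) = csm c (idid_trace_mult P)"
  by (simp add: vec_eq_iff split_paired_all idid_trace_mult_entry csm_def sum_distrib_left)

lemma idid_trace_mult_zero: "idid_trace_mult 0 = 0"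
  by (simp add: vec_eq_iff split_paired_all idid_trace_mult_entry)

lemma idid_trace_mult_sum: "idid_trace_mult (sum f S) = (\<Sum>x\<in>S. idid_trace_mult (f x))"
  by (induction S rule: infinite_finite_induct) (simp_all add: idid_trace_mult_add idid_trace_mult_zero)

lemma idid_trace_mult_el4: "idid_trace_mult (el4 a b c d) = csm (ctrace (c ** d)) (el2 a b)"
  by (simp add: vec_eq_iff split_paired_all idid_trace_mult_entry el4_def el2_def csm_def
      ctrace_def matrix_matrix_mult_def sum_distrib_left sum_distrib_right ac_simps)

lemma idid_trace_mult_in_MMop:
  assumes "P \<in> MMopNNop M N"
  shows "idid_trace_mult P \<in> MMop M"
proof -
  obtain F c where F: "F \<subseteq> {el4 a b c d | a b c d. a \<in> M \<and> b \<in> M \<and> c \<in> N \<and> d \<in> N}"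
      "P = (\<Sum>A\<in>F. csm (c A) A)"
    using assms by (auto simp: MMopNNop_def lin_span_def)
  have "idid_trace_mult A \<in> MMop M" if A: "A \<in> F" for A
  proof -
    obtain a b c' d where "A = el4 a b c' d" "a \<in> M" "b \<in> M"
      using A F(1) by blast
    then show ?thesis
      using csubspace_csm[OF csubspace_MMop el2_in_MMop] by (simp add: idid_trace_mult_el4)
  qed
  then show ?thesis
    unfolding F(2) idid_trace_mult_sum idid_trace_mult_csm
    by (intro csubspace_sum csubspace_csm csubspace_MMop)
qed

lemma cnj_of_bool [simp]: "cnj (of_bool b) = of_bool b"
  by (cases b) simp_all

definition id_tensor_omega :: "complex^('h::finite \<times> 'h)^('h \<times> 'h \<times> 'k::finite \<times> 'k)" where
  "id_tensor_omega = (\<chi> y x. of_bool (y \<in> range (\<lambda>\<gamma>. (fst x, snd x, \<gamma>, \<gamma>))))"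

lemma sum_range_diagonal: "(\<Sum>y\<in>range (\<lambda>\<gamma>. (p, q, \<gamma>, \<gamma>)). f y) = (\<Sum>\<gamma>\<in>UNIV. f (p, q, \<gamma>, \<gamma>))"
  by (subst sum.reindex) (auto simp: inj_on_def)

lemma matrix_mult_id_tensor_omega:
  "(Y ** id_tensor_omega) $ x $ (p, q) = (\<Sum>\<gamma>\<in>UNIV. Y $ x $ (p, q, \<gamma>, \<gamma>))"
  by (simp add: matrix_matrix_mult_def id_tensor_omega_def sum_range_diagonal)

lemma ctranspose_id_tensor_omega_mult:
  "(ctranspose id_tensor_omega ** Y) $ (i, j) $ y = (\<Sum>\<alpha>\<in>UNIV. Y $ (i, j, \<alpha>, \<alpha>) $ y)"
  by (simp add: matrix_matrix_mult_def id_tensor_omega_def ctranspose_def sum_range_diagonal)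

lemma idid_trace_mult_eq_compression:
  "idid_trace_mult P = ctranspose id_tensor_omega ** P ** id_tensor_omega"
proof -
  have "idid_trace_mult P $ (i, j) $ (p, q)
      = (ctranspose id_tensor_omega ** P ** id_tensor_omega) $ (i, j) $ (p, q)" for i j p q
    by (simp add: idid_trace_mult_entry matrix_mult_id_tensor_omega
        ctranspose_id_tensor_omega_mult) (rule sum.swap)
  then show ?thesis by (simp add: vec_eq_iff split_paired_all)
qed

lemma positive_in_MMop_idid_trace_mult:
  assumes "vN_algebra M" and "P \<in> MMopNNop M N" and "P ** P = P" and "cadj P = P"
  shows "positive_in (MMop M) (idid_trace_mult P)"
proof -
  have "idid_trace_mult P = ctranspose (P ** id_tensor_omega) ** (P ** id_tensor_omega)"
  proof -
    have "ctranspose (P ** id_tensor_omega) ** (P ** id_tensor_omega)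
        = ctranspose id_tensor_omega ** (ctranspose P ** P) ** id_tensor_omega"
      by (simp add: ctranspose_matrix_mult matrix_mul_assoc)
    also have "ctranspose P ** P = P"
      using assms(3,4) by (simp add: cadj_eq_ctranspose)
    finally show ?thesis
      by (simp add: idid_trace_mult_eq_compression)
  qed
  then have "\<exists>C\<in>MMop M. idid_trace_mult P = cadj C ** C"
    by (rule gram_factor_in_subalgebra[OF MMop_subalgebra[OF assms(1)]
          idid_trace_mult_in_MMop[OF assms(2)]])
  then show ?thesis
    by (simp add: positive_in_def idid_trace_mult_in_MMop[OF assms(2)])
qed

section \<open>Orthogonal projections and the range of the Weaver action\<close>

definition is_orthogonal_projection :: "('a::real_inner \<Rightarrow> 'a) \<Rightarrow> 'a set \<Rightarrow> bool" where
  "is_orthogonal_projection Q V \<longleftrightarrow> (\<forall>x. Q x \<in> V) \<and> (\<forall>x. \<forall>v\<in>V. v \<bullet> (x - Q x) = 0)"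

lemma orthogonal_projection_fixes:
  assumes "is_orthogonal_projection Q V" and "v \<in> V"
  shows "Q v = v"
proof -
  have "(v - Q v) \<bullet> (v - Q v) = v \<bullet> (v - Q v) - Q v \<bullet> (v - Q v)"
    by (simp add: inner_diff_left)
  also have "\<dots> = 0"
    using assms by (simp add: is_orthogonal_projection_def)
  finally show ?thesis by simp
qed

lemma orthogonal_projection_idem:
  assumes "is_orthogonal_projection Q V"
  shows "Q (Q x) = Q x"
  by (rule orthogonal_projection_fixes[OF assms])
    (use assms in \<open>simp add: is_orthogonal_projection_def\<close>)

lemma orthogonal_projection_range:
  assumes "is_orthogonal_projection Q V"
  shows "range Q = V"
proof
  show "range Q \<subseteq> V"
    using assms by (auto simp: is_orthogonal_projection_def)
  show "V \<subseteq> range Q"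
    using orthogonal_projection_fixes[OF assms] by (metis rangeI subsetI)
qed

lemma orthogonal_projection_self_adjoint:
  assumes "is_orthogonal_projection Q V"
  shows "Q x \<bullet> y = x \<bullet> Q y"
proof -
  have "Q x \<bullet> (y - Q y) = 0" "Q y \<bullet> (x - Q x) = 0"
    using assms by (simp_all add: is_orthogonal_projection_def)
  then show ?thesis
    by (simp add: inner_diff_right inner_commute)
qed

lemma range_adjoint_comp_self:
  fixes f :: "'a::euclidean_space \<Rightarrow> 'b::euclidean_space"
  assumes "linear f"
  shows "range (adjoint f \<circ> f) = range (adjoint f)"
proof
  show "range (adjoint f \<circ> f) \<subseteq> range (adjoint f)"
    by auto
next
  let ?R = "range (adjoint f \<circ> f)"
  have span_R: "span ?R = ?R"
    using linear_subspace_image[OF linear_compose[OF assms adjoint_linear[OF assms]] subspace_UNIV]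
    by simp
  show "range (adjoint f) \<subseteq> ?R"
  proof
    fix y assume "y \<in> range (adjoint f)"
    then obtain b where b: "y = adjoint f b" by blast
    obtain w z where w: "w \<in> ?R" and z_orth: "\<And>u. u \<in> ?R \<Longrightarrow> orthogonal z u"
      and y: "y = w + z"
      using orthogonal_subspace_decomp_exists[of ?R y] unfolding span_R by blast
    have "z \<bullet> adjoint f (f z) = 0"
      using z_orth[of "adjoint f (f z)"] by (simp add: orthogonal_def)
    then have "f z = 0"
      by (simp add: adjoint_clauses(1)[OF assms])
    then have "z \<bullet> y = 0"
      by (simp add: b adjoint_clauses(1)[OF assms])
    moreover have "z \<bullet> w = 0"
      using z_orth[OF w] by (simp add: orthogonal_def)
    ultimately have "z = 0"
      by (simp add: y inner_add_right)
    then show "y \<in> ?R"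
      using y w by simp
  qed
qed

lemma Re_hs_inner: "Re (hs_inner A B) = A \<bullet> B"
proof -
  have "Re (hs_inner A B) = (\<Sum>i\<in>UNIV. \<Sum>k\<in>UNIV. A $ k $ i \<bullet> B $ k $ i)"
    by (simp add: hs_inner_def ctrace_def cadj_def matrix_matrix_mult_def Re_sum inner_complex_def)
  also have "\<dots> = (\<Sum>k\<in>UNIV. \<Sum>i\<in>UNIV. A $ k $ i \<bullet> B $ k $ i)"
    by (rule sum.swap)
  also have "\<dots> = A \<bullet> B"
    by (simp add: inner_vec_def)
  finally show ?thesis .
qed

lemma inner_kron_mat_one: "kron X (mat 1) \<bullet> Z = X \<bullet> ptrace_K Z"
proof -
  have delta: "(a * (if c then 1 else 0)) \<bullet> z = (if c then a \<bullet> z else 0)" for a z :: complex and c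
    by simp
  have "kron X (mat 1) \<bullet> Z = (\<Sum>i\<in>UNIV. \<Sum>\<alpha>\<in>UNIV. \<Sum>j\<in>UNIV. X $ i $ j \<bullet> Z $ (i, \<alpha>) $ (j, \<alpha>))"
    by (simp add: inner_vec_def sum_UNIV_prod kron_def mat_def delta)
  also have "\<dots> = (\<Sum>i\<in>UNIV. \<Sum>j\<in>UNIV. \<Sum>\<alpha>\<in>UNIV. X $ i $ j \<bullet> Z $ (i, \<alpha>) $ (j, \<alpha>))"
    by (intro sum.cong refl) (rule sum.swap)
  also have "\<dots> = X \<bullet> ptrace_K Z"
    by (simp add: inner_vec_def ptrace_K_def inner_sum_right)
  finally show ?thesis .
qed

lemma weaver2_idid_trace_mult:
  "weaver2 (idid_trace_mult P) X = ptrace_K (weaver4 P (kron X (mat 1)))"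
proof -
  have "ptrace_K (weaver4 P (kron X (mat 1))) $ i $ j
      = (\<Sum>\<alpha>\<in>UNIV. \<Sum>p\<in>UNIV. \<Sum>q\<in>UNIV. \<Sum>\<gamma>\<in>UNIV. P $ (i, j, \<alpha>, \<alpha>) $ (p, q, \<gamma>, \<gamma>) * X $ p $ q)"
    for i j
    by (simp add: ptrace_K_def weaver4_def kron_def mat_def if_distrib if_distribR
        cong: if_cong)
  also have "\<dots> i j = (\<Sum>p\<in>UNIV. \<Sum>q\<in>UNIV. \<Sum>\<alpha>\<in>UNIV. \<Sum>\<gamma>\<in>UNIV.
      P $ (i, j, \<alpha>, \<alpha>) $ (p, q, \<gamma>, \<gamma>) * X $ p $ q)" for i j
    by (subst sum.swap) (intro sum.cong refl, rule sum.swap)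
  also have "\<dots> i j = weaver2 (idid_trace_mult P) X $ i $ j" for i j
    by (simp add: weaver2_def idid_trace_mult_entry sum_distrib_right)
  finally show ?thesis by (simp add: vec_eq_iff)
qed

lemma linear_weaver4: "linear (weaver4 P)"
  by (rule linearI) (simp_all add: vec_eq_iff weaver4_def distrib_left sum.distrib scaleR_sum_right)

lemma linear_kron_mat_one: "linear (\<lambda>X. kron X (mat 1))"
  by (rule linearI) (simp_all add: vec_eq_iff kron_def distrib_right)

lemma multi_edge_indicator_orthogonal_projection:
  assumes "multi_edge_indicator M N V P"
  shows "is_orthogonal_projection (weaver4 P) V"
  using assms by (auto simp: multi_edge_indicator_def is_orthogonal_projection_def
      simp flip: Re_hs_inner)

lemma range_weaver2_idid_trace_mult:
  fixes P :: "('h::finite \<times> 'h \<times> 'k::finite \<times> 'k) cmat"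
  assumes Q: "is_orthogonal_projection (weaver4 P) V"
  shows "range (weaver2 (idid_trace_mult P)) = ptrace_K ` V"
proof -
  define f :: "'h cmat \<Rightarrow> ('h \<times> 'k) cmat" where "f = (\<lambda>X. weaver4 P (kron X (mat 1)))"
  have "linear f"
    using linear_compose[OF linear_kron_mat_one linear_weaver4[of P]] by (simp add: f_def o_def)
  have adjoint_f: "adjoint f = ptrace_K \<circ> weaver4 P"
    by (rule adjoint_unique)
      (simp add: f_def orthogonal_projection_self_adjoint[OF Q] inner_kron_mat_one)
  have "weaver2 (idid_trace_mult P) = adjoint f \<circ> f"
    unfolding adjoint_f
    by (simp add: fun_eq_iff f_def weaver2_idid_trace_mult orthogonal_projection_idem[OF Q])
  then have "range (weaver2 (idid_trace_mult P)) = range (adjoint f)"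
    using range_adjoint_comp_self[OF \<open>linear f\<close>] by simp
  also have "\<dots> = ptrace_K ` V"
    by (simp only: adjoint_f image_comp[symmetric] orthogonal_projection_range[OF Q])
  finally show ?thesis .
qed

theorem proposition4p9:
  fixes M :: "'h::finite cmat set" and N :: "'k::finite cmat set"
    and V :: "('h \<times> 'k) cmat set" and P :: "('h \<times> 'h \<times> 'k \<times> 'k) cmat"
  assumes "vN_algebra M" and "vN_algebra N" and "minimally_represented N"
    and "quantum_multigraph M N V"
    and "multi_edge_indicator M N V P"
  shows "positive_in (MMop M) (idid_trace (idid_mult P))
    \<and> range (weaver2 (idid_trace (idid_mult P))) = ptrace_K ` V"
proof -
  have P: "P \<in> MMopNNop M N" "P ** P = P" "cadj P = P"
    using assms(5) by (simp_all add: multi_edge_indicator_def)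
  have "positive_in (MMop M) (idid_trace_mult P)"
    using positive_in_MMop_idid_trace_mult[OF assms(1) P] .
  moreover have "range (weaver2 (idid_trace_mult P)) = ptrace_K ` V"
    using range_weaver2_idid_trace_mult[OF multi_edge_indicator_orthogonal_projection[OF assms(5)]] .
  ultimately show ?thesis
    by (simp add: idid_trace_mult_def)
qed

end
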